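(* Let $W:[0,1]^2\to[0,1]$ be measurable ($[0,1]$ with Lebesgue measure $\lambda$). Then the following are equivalent: (i) for every finite $n$, $P(n,W)$ is almost surely a poset; (ii) $P(\infty,W)$ is almost surely a poset; (iii) there exist a strict partial order $\prec$ on $[0,1]$ making $([0,1],\mathcal B,\lambda,\prec)$ an ordered probability space and a kernel $W'$ on it such that $W=W'$ a.e.; (iv) $t(\mathsf D_1,W)=t(\mathsf D_2,W)$ and $t(\mathsf D_3,W)=0$.
   Context: For $n\in\mathbb N\cup\{\infty\}$, $[n]=\{1,\dots,n\}$ ($[\infty]=\mathbb N$). For measurable $W:[0,1]^2\to[0,1]$, $P(n,W)$ is the random digraph on $[n]$ obtained by taking i.i.d. uniform $X_i\in[0,1]$ and independent i.i.d. $\xi_{ij}\sim U(0,1)$, $i,j\in\mathbb N$, and putting an edge $i\to j$ iff $\xi_{ij}<W(X_i,X_j)$; it is a poset if this relation is a strict partial order. For a finite digraph $F$ on $\{1,\dots,k\}$, $t(F,W)=\int_{[0,1]^k}\prod_{(i,j)\in E(F)}W(x_i,x_j)\,dx_1\cdots dx_k$. $\mathsf D_1,\mathsf D_2,\mathsf D_3$ are the digraphs on $\{1,2,3\}$ with edge sets $\{12,23\}$, $\{12,23,13\}$, $\{12,23,31\}$ respectively. An ordered probability space $(\mathcal S,\mathcal F,\mu,\prec)$ is a probability space with a strict partial order $\prec$ such that $\{(x,y):x\prec y\}\in\mathcal F\times\mathcal F$ ($\mathcal B$ = Borel $\sigma$-field); a kernel on it is a measurable $W':\mathcal S^2\to[0,1]$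 such that for all $x,y,z$: $W'(x,y)>0\Rightarrow x\prec y$, and ($W'(x,y)>0$, $W'(y,z)>0$) $\Rightarrow W'(x,z)=1$. *)

theory Defs
  imports "HOL-Probability.Probability"
begin

definition unitI :: "real measure" where
  "unitI = restrict_space lborel {0..1}"

text \<open>Sample space of the construction of P(n,W): independent uniform variables
  X_i (indexed by Inl i) and xi_ij (indexed by Inr (i,j)).\<close>
definition sample_space :: "(nat + nat \<times> nat \<Rightarrow> real) measure" where
  "sample_space = PiM UNIV (\<lambda>_. unitI)"

definition rand_edge :: "(real \<Rightarrow> real \<Rightarrow> real) \<Rightarrow> (nat + nat \<times> nat \<Rightarrow> real) \<Rightarrow> nat \<Rightarrow> nat \<Rightarrow> bool" where
  "rand_edge W \<omega> i j \<longleftrightarrow> i \<noteq> j \<and> \<omega> (Inr (i, j)) < W (\<omega> (Inl i)) (\<omega> (Inl j))"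

definition strict_po_on :: "'a set \<Rightarrow> ('a \<Rightarrow> 'a \<Rightarrow> bool) \<Rightarrow> bool" where
  "strict_po_on S R \<longleftrightarrow> (\<forall>x\<in>S. \<not> R x x) \<and>
     (\<forall>x\<in>S. \<forall>y\<in>S. \<forall>z\<in>S. R x y \<and> R y z \<longrightarrow> R x z)"

definition rand_is_poset :: "(real \<Rightarrow> real \<Rightarrow> real) \<Rightarrow> nat set \<Rightarrow> (nat + nat \<times> nat \<Rightarrow> real) \<Rightarrow> bool" where
  "rand_is_poset W V \<omega> \<longleftrightarrow> strict_po_on V (rand_edge W \<omega>)"

text \<open>Homomorphism density t(F,W) for a digraph F on {1..k} with edge set E.\<close>
definition hom_density :: "nat \<Rightarrow> (nat \<times> nat) set \<Rightarrow> (real \<Rightarrow> real \<Rightarrow> real) \<Rightarrow> real" where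
  "hom_density k E W = integral\<^sup>L (PiM {1..k} (\<lambda>_. unitI)) (\<lambda>x. \<Prod>(i,j)\<in>E. W (x i) (x j))"

definition D1 :: "(nat \<times> nat) set" where "D1 = {(1,2),(2,3)}"
definition D2 :: "(nat \<times> nat) set" where "D2 = {(1,2),(2,3),(1,3)}"
definition D3 :: "(nat \<times> nat) set" where "D3 = {(1,2),(2,3),(3,1)}"

definition ordered_unitI :: "(real \<Rightarrow> real \<Rightarrow> bool) \<Rightarrow> bool" where
  "ordered_unitI prec \<longleftrightarrow> strict_po_on {0..1} prec \<and>
     {(x,y) \<in> {0..1} \<times> {0..1}. prec x y} \<in> sets (unitI \<Otimes>\<^sub>M unitI)"

definition is_kernel :: "(real \<Rightarrow> real \<Rightarrow> bool) \<Rightarrow> (real \<Rightarrow> real \<Rightarrow> real) \<Rightarrow> bool" where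
  "is_kernel prec W' \<longleftrightarrow>
     (\<lambda>(x,y). W' x y) \<in> borel_measurable (unitI \<Otimes>\<^sub>M unitI) \<and>
     (\<forall>x\<in>{0..1}. \<forall>y\<in>{0..1}. 0 \<le> W' x y \<and> W' x y \<le> 1) \<and>
     (\<forall>x\<in>{0..1}. \<forall>y\<in>{0..1}. W' x y > 0 \<longrightarrow> prec x y) \<and>
     (\<forall>x\<in>{0..1}. \<forall>y\<in>{0..1}. \<forall>z\<in>{0..1}. W' x y > 0 \<and> W' y z > 0 \<longrightarrow> W' x z = 1)"

end

theory Submission
  imports Defs
begin

text \<open>By Fubini, condition (iv) says that for almost every triple the configurations
  \<open>x \<rightarrow> y \<rightarrow> z\<close> without \<open>x \<rightarrow> z\<close> and \<open>x \<rightarrow> y \<rightarrow> z \<rightarrow> x\<close> have weight zero, i.e.\ \<open>W\<close> is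
  transitive and free of two-cycles up to null sets; the same integrals are the probabilities that
  vertices 1, 2, 3 of \<open>P(\<infinity>,W)\<close> violate transitivity, so (ii) and (iv) are equivalent.
  To pass from almost everywhere to everywhere, let \<open>x \<prec> y\<close> demand that \<open>x\<close> is a Lebesgue density
  point of the in-support of \<open>y\<close> and \<open>y\<close> one of the out-support of \<open>x\<close>: density points are
  inherited along almost everywhere inclusions, which makes \<open>\<prec>\<close> a partial order, and modifying
  \<open>W\<close> on a null set turns it into a kernel for \<open>\<prec>\<close>. Conversely, along a kernel two edges of
  \<open>P(\<infinity>,W)\<close> force weight 1 on the closing pair, which is then an edge unless its uniform label
  equals 1.\<close>

section \<open>Lebesgue density points on the real line\<close>

lemma emeasure_lborel_cball_real: "0 \<le> r \<Longrightarrow> emeasure lborel (cball (x::real) r) = ennreal (2*r)"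
  by (simp add: cball_eq_atLeastAtMost)

lemma Vitali_cover_complement_fraction:
  fixes A S G :: "real set" and \<delta> :: real
  assumes A: "A \<in> sets borel" and \<delta>: "\<delta> > 0" and G: "open G" "S \<subseteq> G"
    and H: "\<And>x d. x \<in> S \<Longrightarrow> d > 0 \<Longrightarrow> \<exists>r. 0 < r \<and> r < d \<and> ennreal (\<delta> * (2*r)) < emeasure lborel (cball x r - A)"
  obtains U where "U \<in> sets borel" "negligible (S - U)" "ennreal \<delta> * emeasure lborel U \<le> emeasure lborel (G - A)"
proof -
  define K where "K = {(x,r). x \<in> S \<and> 0 < r \<and> cball x r \<subseteq> G \<and>
       ennreal (\<delta> * (2*r)) < emeasure lborel (cball x r - A)}"
  have K_pos: "\<And>i. i \<in> K \<Longrightarrow> 0 < snd i" by (auto simp: K_def)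
  have K_fine: "\<exists>i. i \<in> K \<and> x \<in> cball (fst i) (snd i) \<and> snd i < d" if x: "x \<in> S" and "0 < d" for x d
  proof -
    obtain \<rho> where \<rho>: "\<rho> > 0" "ball x \<rho> \<subseteq> G" using G x open_contains_ball_eq by blast
    obtain r where r: "0 < r" "r < min d \<rho>" "ennreal (\<delta> * (2*r)) < emeasure lborel (cball x r - A)"
      using H[OF x, of "min d \<rho>"] \<rho> \<open>0 < d\<close> by auto
    have "cball x r \<subseteq> G" using r \<rho>(2) by (auto simp: subset_iff)
    then show ?thesis using r x by (intro exI[of _ "(x,r)"]) (auto simp: K_def)
  qed
  obtain C where C: "countable C" "C \<subseteq> K"
     "pairwise (\<lambda>i j. disjnt (cball (fst i) (snd i)) (cball (fst j) (snd j))) C"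
     "negligible (S - (\<Union>i \<in> C. cball (fst i) (snd i)))"
    using Vitali_covering_theorem_cballs[of K snd S fst] K_pos K_fine by blast
  define U where "U = (\<Union>i \<in> C. cball (fst i) (snd i))"
  have disj: "disjoint_family_on (\<lambda>i. cball (fst i) (snd i)) C"
    using C(3) unfolding disjoint_family_on_def pairwise_def disjnt_def by auto
  then have disj_A: "disjoint_family_on (\<lambda>i. cball (fst i) (snd i) - A) C"
    unfolding disjoint_family_on_def by blast
  have "ennreal \<delta> * emeasure lborel U = (\<integral>\<^sup>+ i. ennreal \<delta> * emeasure lborel (cball (fst i) (snd i)) \<partial>count_space C)"
    unfolding U_def using C(1) disj by (subst emeasure_UN_countable) (auto simp: nn_integral_cmult)
  also have "\<dots> \<le> (\<integral>\<^sup>+ i. emeasure lborel (cball (fst i) (snd i) - A) \<partial>count_space C)"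
  proof (rule nn_integral_mono)
    fix i assume "i \<in> space (count_space C)"
    then have i: "i \<in> K" using C(2) by auto
    then have "ennreal \<delta> * emeasure lborel (cball (fst i) (snd i)) = ennreal (\<delta> * (2 * snd i))"
      using \<delta> K_pos[OF i] by (simp add: emeasure_lborel_cball_real ennreal_mult)
    also have "\<dots> \<le> emeasure lborel (cball (fst i) (snd i) - A)"
      using i by (auto simp: K_def)
    finally show "ennreal \<delta> * emeasure lborel (cball (fst i) (snd i)) \<le> emeasure lborel (cball (fst i) (snd i) - A)" .
  qed
  also have "\<dots> = emeasure lborel (\<Union>i \<in> C. cball (fst i) (snd i) - A)"
    by (rule emeasure_UN_countable[symmetric]) (use C(1) disj_A A in auto)
  also have "\<dots> \<le> emeasure lborel (G - A)"
  proof (rule emeasure_mono)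
    show "(\<Union>i \<in> C. cball (fst i) (snd i) - A) \<subseteq> G - A"
    proof
      fix y assume "y \<in> (\<Union>i \<in> C. cball (fst i) (snd i) - A)"
      then obtain i where i: "i \<in> C" "y \<in> cball (fst i) (snd i)" "y \<notin> A" by blast
      then have "i \<in> K" using C(2) by blast
      then have "cball (fst i) (snd i) \<subseteq> G" by (auto simp: K_def split: prod.splits)
      then show "y \<in> G - A" using i by blast
    qed
  qed (use A G(1) in auto)
  finally have "ennreal \<delta> * emeasure lborel U \<le> emeasure lborel (G - A)" .
  moreover have "U \<in> sets borel" unfolding U_def using C(1) by (intro sets.countable_UN'') auto
  ultimately show ?thesis using that C(4) unfolding U_def by blast
qed

lemma negligible_if_complement_fraction:
  fixes A S :: "real set" and \<delta> :: real
  assumes A: "A \<in> sets borel" and \<delta>: "\<delta> > 0" and SA: "S \<subseteq> A"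
    and H: "\<And>x d. x \<in> S \<Longrightarrow> d > 0 \<Longrightarrow> \<exists>r. 0 < r \<and> r < d \<and> ennreal (\<delta> * (2*r)) < emeasure lborel (cball x r - A)"
  shows "negligible S"
proof (subst negligible_outer_le, intro allI impI)
  fix e :: real assume e: "e > 0"
  have "A \<in> sets lebesgue" using A by (simp add: sets_completionI_sets)
  then obtain G where G: "open G" "A \<subseteq> G" "emeasure lebesgue (G - A) < ennreal (\<delta> * e)"
    using sets_lebesgue_outer_open[of A "\<delta>*e"] \<delta> e by (metis mult_pos_pos)
  have GA: "emeasure lborel (G - A) < ennreal (\<delta> * e)"
    using G A by (simp add: emeasure_completion main_part_sets)
  obtain U where U: "U \<in> sets borel" "negligible (S - U)" "ennreal \<delta> * emeasure lborel U \<le> emeasure lborel (G - A)"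
    using Vitali_cover_complement_fraction[OF A \<delta> G(1) _ H] SA G(2) by blast
  have U_small: "emeasure lborel U < ennreal e"
  proof (rule ccontr)
    assume "\<not> emeasure lborel U < ennreal e"
    then have "ennreal \<delta> * ennreal e \<le> ennreal \<delta> * emeasure lborel U" by (simp add: mult_left_mono)
    with U(3) GA \<delta> e show False by (simp add: ennreal_mult[symmetric])
  qed
  have U_lmeasurable: "U \<in> lmeasurable"
    using U(1) U_small ennreal_less_top[of e] order.strict_trans[OF U_small]
    by (intro fmeasurableI) (auto simp: sets_completionI_sets emeasure_completion main_part_sets)
  have SU: "S - U \<in> lmeasurable" using U(2) by (rule negligible_imp_measurable)
  show "\<exists>T. S \<subseteq> T \<and> T \<in> lmeasurable \<and> measure lebesgue T \<le> e"
  proof (intro exI conjI)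
    show "S \<subseteq> (S - U) \<union> U" by auto
    show "(S - U) \<union> U \<in> lmeasurable" using SU U_lmeasurable by (rule fmeasurable.Un)
    have "measure lebesgue ((S - U) \<union> U) \<le> measure lebesgue (S - U) + measure lebesgue U"
      using U_lmeasurable SU by (intro measure_Un_le) auto
    also have "measure lebesgue (S - U) = 0" using U(2) by (rule negligible_imp_measure0)
    also have "measure lebesgue U = measure lborel U" using U(1) by (simp add: measure_completion)
    also have "measure lborel U \<le> e" using U_small e by (simp add: measure_def enn2real_leI less_imp_le)
    finally show "measure lebesgue ((S - U) \<union> U) \<le> e" by simp
  qed
qed

text \<open>Lower density 1 along the radii \<open>1/(n+1)\<close>; the countable choice of radii keeps the
  notion measurable in \<open>x\<close>.\<close>
definition density_point :: "real set \<Rightarrow> real \<Rightarrow> bool" where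
 "density_point A x \<longleftrightarrow> (\<forall>k::nat. \<exists>N::nat. \<forall>n\<ge>N. ennreal ((1 - 1/Suc k) * (2/Suc n)) \<le> emeasure lborel (A \<inter> cball x (1/Suc n)))"

lemma emeasure_Int_cball_finite: "emeasure lborel (B \<inter> cball (x::real) r) \<noteq> \<top>"
proof -
  have "emeasure lborel (B \<inter> cball x r) \<le> emeasure lborel {x - \<bar>r\<bar>..x + \<bar>r\<bar>}"
    by (rule emeasure_mono) (auto simp: dist_real_def)
  also have "\<dots> < \<top>" by simp
  finally show ?thesis by simp
qed

lemma negligible_low_density_points:
  fixes A :: "real set"
  assumes A: "A \<in> sets borel"
  shows "negligible {x \<in> A. \<forall>N. \<exists>n\<ge>N.
           emeasure lborel (A \<inter> cball x (1/Suc n)) < ennreal ((1 - 1/Suc k) * (2/Suc n))}"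
    (is "negligible ?S")
proof (rule negligible_if_complement_fraction[OF A, of "1/Suc k"])
  show "?S \<subseteq> A" by auto
  fix x d assume xS: "x \<in> ?S" and d: "(0::real) < d"
  obtain N where N: "inverse (real (Suc N)) < d" using reals_Archimedean[OF d] by blast
  obtain n where n: "n \<ge> N" and lt: "emeasure lborel (A \<inter> cball x (1/Suc n)) < ennreal ((1 - 1/Suc k) * (2/Suc n))"
    using xS by auto
  define r where "r = 1 / real (Suc n)"
  have r0: "0 < r" by (simp add: r_def)
  have "r \<le> 1 / real (Suc N)" unfolding r_def using n by (simp add: frac_le)
  then have rd: "r < d" using N by (simp add: inverse_eq_divide)
  have m1: "measure lborel (A \<inter> cball x r) < (1 - 1/Suc k) * (2*r)"
  proof -
    have "emeasure lborel (A \<inter> cball x r) = ennreal (measure lborel (A \<inter> cball x r))"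
      by (rule emeasure_eq_ennreal_measure[OF emeasure_Int_cball_finite])
    with lt have "ennreal (measure lborel (A \<inter> cball x r)) < ennreal ((1 - 1/Suc k) * (2*r))"
      by (simp add: r_def)
    then show ?thesis by (simp add: ennreal_less_iff)
  qed
  have cb: "measure lborel (cball x r) = 2*r" using r0 by (simp add: cball_eq_atLeastAtMost)
  have eqc: "cball x r - A = (-A) \<inter> cball x r" by blast
  have "measure lborel (cball x r - A) = measure lborel (cball x r - (A \<inter> cball x r))"
    by (rule arg_cong[where f="measure lborel"]) blast
  also have "\<dots> = measure lborel (cball x r) - measure lborel (A \<inter> cball x r)"
    by (rule measure_Diff) (use A emeasure_Int_cball_finite[of UNIV x r] in auto)
  finally have m2: "measure lborel (cball x r - A) > (1/Suc k) * (2*r)"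
    using m1 cb by (simp add: algebra_simps)
  have "emeasure lborel (cball x r - A) = ennreal (measure lborel (cball x r - A))"
    by (rule emeasure_eq_ennreal_measure)
       (simp only: eqc emeasure_Int_cball_finite not_False_eq_True)
  then have "ennreal (1/Suc k * (2*r)) < emeasure lborel (cball x r - A)"
    using m2 r0 by (simp add: ennreal_less_iff)
  then show "\<exists>r. 0 < r \<and> r < d \<and> ennreal (1/Suc k * (2*r)) < emeasure lborel (cball x r - A)"
    using r0 rd by blast
qed simp

lemma AE_density_point:
  assumes A: "A \<in> sets borel"
  shows "AE x in lborel. x \<in> A \<longrightarrow> density_point A x"
proof -
  define S where "S k = {x \<in> A. \<forall>N. \<exists>n\<ge>N. emeasure lborel (A \<inter> cball x (1/Suc n)) < ennreal ((1 - 1/Suc k) * (2/Suc n))}" for k :: nat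
  have negS: "negligible (S k)" for k
    unfolding S_def by (rule negligible_low_density_points[OF A])
  have "negligible (\<Union>k. S k)" using negS by (intro negligible_countable_Union) auto
  moreover have "{x. \<not> (x \<in> A \<longrightarrow> density_point A x)} \<subseteq> (\<Union>k. S k)"
  proof
    fix x assume "x \<in> {x. \<not> (x \<in> A \<longrightarrow> density_point A x)}"
    then have xA: "x \<in> A" and nd: "\<not> density_point A x" by auto
    from nd obtain k where "\<forall>N. \<exists>n\<ge>N. \<not> ennreal ((1 - 1/Suc k) * (2/Suc n)) \<le> emeasure lborel (A \<inter> cball x (1/Suc n))"
      unfolding density_point_def by blast
    then have "x \<in> S k" using xA unfolding S_def by (simp add: not_le)
    then show "x \<in> (\<Union>k. S k)" by blast
  qed
  ultimately have "AE x in lebesgue. x \<in> A \<longrightarrow> density_point A x"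
    unfolding eventually_ae_filter_negligible by blast
  then show ?thesis by (simp add: AE_completion_iff)
qed

lemma density_point_AE_mono:
  assumes A: "A \<in> sets borel" and B: "B \<in> sets borel"
    and AE: "AE w in lborel. w \<in> A \<longrightarrow> w \<in> B" and d: "density_point A x"
  shows "density_point B x"
proof -
  have "AE w in lborel. w \<notin> A - B" using AE by eventually_elim auto
  then have N: "A - B \<in> null_sets lborel"
    using AE_iff_null_sets[of "A - B" lborel] A B by auto
  have le: "emeasure lborel (A \<inter> c) \<le> emeasure lborel (B \<inter> c)" if c: "c \<in> sets borel" for c
  proof -
    have "emeasure lborel (A \<inter> c) \<le> emeasure lborel ((B \<inter> c) \<union> (A - B))"
      by (rule emeasure_mono) (use B c N in auto)
    also have "\<dots> = emeasure lborel (B \<inter> c)"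
      by (rule emeasure_Un_null_set) (use B c N in auto)
    finally show ?thesis .
  qed
  show ?thesis unfolding density_point_def
  proof
    fix k
    obtain N where N: "\<forall>n\<ge>N. ennreal ((1 - 1/Suc k) * (2/Suc n)) \<le> emeasure lborel (A \<inter> cball x (1/Suc n))"
      using d unfolding density_point_def by blast
    have "ennreal ((1 - 1/Suc k) * (2/Suc n)) \<le> emeasure lborel (B \<inter> cball x (1/Suc n))" if "n \<ge> N" for n
      using N that le[of "cball x (1/Suc n)"] by (meson order_trans sets_lborel borel_closed closed_cball)
    then show "\<exists>N. \<forall>n\<ge>N. ennreal ((1 - 1/Suc k) * (2/Suc n)) \<le> emeasure lborel (B \<inter> cball x (1/Suc n))"
      by blast
  qed
qed

lemma density_point_AE_disjoint:
  assumes A: "A \<in> sets borel" and B: "B \<in> sets borel"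
    and AE: "AE w in lborel. \<not> (w \<in> A \<and> w \<in> B)" and dA: "density_point A x" and dB: "density_point B x"
  shows False
proof -
  obtain N1 where N1: "\<forall>n\<ge>N1. ennreal ((1 - 1/Suc 3) * (2/Suc n)) \<le> emeasure lborel (A \<inter> cball x (1/Suc n))"
    using dA unfolding density_point_def by blast
  obtain N2 where N2: "\<forall>n\<ge>N2. ennreal ((1 - 1/Suc 3) * (2/Suc n)) \<le> emeasure lborel (B \<inter> cball x (1/Suc n))"
    using dB unfolding density_point_def by blast
  define n where "n = max N1 N2"
  define c where "c = cball x (1/Suc n)"
  have c: "c \<in> sets borel" by (simp add: c_def)
  have a: "ennreal (3/4 * (2/Suc n)) \<le> emeasure lborel (A \<inter> c)"
    using N1 unfolding c_def n_def by (simp add: numeral_eq_Suc)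
  have b: "ennreal (3/4 * (2/Suc n)) \<le> emeasure lborel (B \<inter> c)"
    using N2 unfolding c_def n_def by (simp add: numeral_eq_Suc)
  have "AE w in lborel. w \<notin> A \<inter> B" using AE by eventually_elim auto
  then have N: "A \<inter> B \<in> null_sets lborel"
    using AE_iff_null_sets[of "A \<inter> B" lborel] A B by auto
  have "(A \<inter> c) \<inter> (B \<inter> c) \<in> null_sets lborel"
    by (rule null_sets_subset[OF N]) (use c A B in auto)
  then have eqU: "emeasure lborel ((A \<inter> c) \<union> (B \<inter> c)) = emeasure lborel (A \<inter> c) + emeasure lborel (B \<inter> c)"
    by (intro emeasure_Un') (use A B c in auto)
  have "emeasure lborel (A \<inter> c) + emeasure lborel (B \<inter> c) = emeasure lborel ((A \<inter> c) \<union> (B \<inter> c))"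
    by (rule eqU[symmetric])
  also have "\<dots> \<le> emeasure lborel c"
    by (rule emeasure_mono) (use c in auto)
  also have "emeasure lborel c = ennreal (2/Suc n)"
    unfolding c_def by (subst emeasure_lborel_cball_real) auto
  finally have "emeasure lborel (A \<inter> c) + emeasure lborel (B \<inter> c) \<le> ennreal (2/Suc n)" .
  moreover have "ennreal (3/4 * (2/Suc n)) + ennreal (3/4 * (2/Suc n)) \<le> emeasure lborel (A \<inter> c) + emeasure lborel (B \<inter> c)"
    using a b by (rule add_mono)
  ultimately have "ennreal (3/4 * (2/Suc n) + 3/4 * (2/Suc n)) \<le> ennreal (2/Suc n)"
    by (subst ennreal_plus) auto
  then have "3/4 * (2/Suc n) + 3/4 * (2/Suc n) \<le> 2/ (Suc n :: real)"
    by (subst (asm) ennreal_le_iff) auto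
  moreover have "(0::real) < 2 / real (Suc n)" by simp
  ultimately show False by linarith
qed

lemma AE_density_point_imp_mem:
  assumes A: "A \<in> sets borel"
  shows "AE x in lborel. density_point A x \<longrightarrow> x \<in> A"
proof -
  have "AE x in lborel. x \<in> -A \<longrightarrow> density_point (-A) x" using A by (intro AE_density_point) auto
  then show ?thesis
  proof (rule AE_mp, intro AE_I2 impI)
    fix x assume h: "x \<in> -A \<longrightarrow> density_point (-A) x" and d: "density_point A x"
    show "x \<in> A"
    proof (rule ccontr)
      assume "x \<notin> A"
      then have "density_point (-A) x" using h by auto
      then show False using density_point_AE_disjoint[of A "-A" x] d A by auto
    qed
  qed
qed

lemma space_unitI[simp]: "space unitI = {0..1}"
  by (simp add: unitI_def space_restrict_space)

lemma sets_unitI_iff: "A \<in> sets unitI \<longleftrightarrow> A \<in> sets borel \<and> A \<subseteq> {0..1}"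
  unfolding unitI_def by (subst sets_restrict_space_iff) auto

lemma emeasure_unitI: "A \<in> sets unitI \<Longrightarrow> emeasure unitI A = emeasure lborel A"
  unfolding unitI_def by (subst emeasure_restrict_space) (auto simp: sets_restrict_space_iff)

lemma AE_unitI: "(AE x in unitI. P x) \<longleftrightarrow> (AE x in lborel. x \<in> {0..1} \<longrightarrow> P x)"
  unfolding unitI_def by (rule AE_restrict_space_iff) auto

lemma prob_space_unitI: "prob_space unitI"
  unfolding unitI_def by (rule prob_space_restrict_space) auto

interpretation unitI: prob_space unitI by (rule prob_space_unitI)

interpretation unitI_pair: pair_sigma_finite unitI unitI ..

lemma measurable_borel_unitI: "f \<in> borel_measurable borel \<Longrightarrow> f \<in> borel_measurable unitI"
  unfolding unitI_def by (rule measurable_restrict_space1) simp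

lemma pred_AE_unitI:
  assumes R: "Measurable.pred (N \<Otimes>\<^sub>M unitI) (\<lambda>q. R (fst q) (snd q))"
  shows "Measurable.pred N (\<lambda>p. AE w in unitI. R p w)"
proof -
  define Q where "Q = {q \<in> space (N \<Otimes>\<^sub>M unitI). \<not> R (fst q) (snd q)}"
  have Q: "Q \<in> sets (N \<Otimes>\<^sub>M unitI)" unfolding Q_def using R by measurable
  have eq: "(AE w in unitI. R p w) \<longleftrightarrow> emeasure unitI (Pair p -` Q) = 0" if p: "p \<in> space N" for p
  proof (rule AE_iff_measurable)
    show "Pair p -` Q \<in> sets unitI" using Q by (rule sets_Pair1)
    show "{x \<in> space unitI. \<not> R p x} = Pair p -` Q" using p by (auto simp: Q_def space_pair_measure)
  qed
  have m: "(\<lambda>p. emeasure unitI (Pair p -` Q)) \<in> borel_measurable N"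
    using Q by (rule unitI.measurable_emeasure_Pair)
  have "Measurable.pred N (\<lambda>p. emeasure unitI (Pair p -` Q) = 0)" using m by measurable
  then show ?thesis by (rule measurable_cong[THEN iffD1, rotated]) (use eq in auto)
qed

lemma pred_density_point_section:
  assumes R: "Measurable.pred (N \<Otimes>\<^sub>M unitI) (\<lambda>q. R (fst q) (snd q))"
    and c[measurable]: "c \<in> borel_measurable N"
  shows "Measurable.pred N (\<lambda>p. density_point {w \<in> {0..1}. R p w} (c p))"
proof -
  define Q where "Q n = {q \<in> space (N \<Otimes>\<^sub>M unitI). R (fst q) (snd q) \<and> dist (snd q) (c (fst q)) \<le> 1 / Suc n}" for n :: nat
  have Q: "Q n \<in> sets (N \<Otimes>\<^sub>M unitI)" for n
  proof -
    have s[measurable]: "(\<lambda>q. snd q) \<in> borel_measurable (N \<Otimes>\<^sub>M unitI)"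
      by (rule measurable_compose[OF measurable_snd measurable_borel_unitI]) simp
    have "Measurable.pred (N \<Otimes>\<^sub>M unitI) (\<lambda>q. dist (snd q) (c (fst q)) \<le> 1 / Suc n)"
      by measurable
    then show ?thesis unfolding Q_def using R by measurable
  qed
  have eq: "emeasure lborel ({w \<in> {0..1}. R p w} \<inter> cball (c p) (1/Suc n)) = emeasure unitI (Pair p -` Q n)"
    if p: "p \<in> space N" for p n
  proof -
    have "Pair p -` Q n = {w \<in> {0..1}. R p w} \<inter> cball (c p) (1/Suc n)"
      using p by (auto simp: Q_def space_pair_measure dist_commute)
    moreover have "Pair p -` Q n \<in> sets unitI" using Q by (rule sets_Pair1)
    ultimately show ?thesis by (simp add: emeasure_unitI)
  qed
  have m[measurable]: "(\<lambda>p. emeasure unitI (Pair p -` Q n)) \<in> borel_measurable N" for n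
    using Q by (rule unitI.measurable_emeasure_Pair)
  have "Measurable.pred N (\<lambda>p. \<forall>k::nat. \<exists>N::nat. \<forall>n\<ge>N. ennreal ((1 - 1/Suc k) * (2/Suc n)) \<le> emeasure unitI (Pair p -` Q n))"
    by measurable
  then show ?thesis
    by (rule measurable_cong[THEN iffD1, rotated]) (use eq in \<open>auto simp: density_point_def\<close>)
qed


section \<open>A kernel version of an almost everywhere transitive graphon\<close>

definition in_support :: "(real \<Rightarrow> real \<Rightarrow> real) \<Rightarrow> real \<Rightarrow> real set" where
  "in_support W y = {w \<in> {0..1}. W w y > 0}"

definition out_support :: "(real \<Rightarrow> real \<Rightarrow> real) \<Rightarrow> real \<Rightarrow> real set" where
  "out_support W x = {w \<in> {0..1}. W x w > 0}"

definition saturated_in :: "(real \<Rightarrow> real \<Rightarrow> real) \<Rightarrow> real \<Rightarrow> real set" where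
  "saturated_in W y = {w \<in> {0..1}. W w y = 1}"

definition null_two_cycles :: "(real \<Rightarrow> real \<Rightarrow> real) \<Rightarrow> real \<Rightarrow> bool" where
  "null_two_cycles W x \<longleftrightarrow> (AE w in unitI. \<not> (W x w > 0 \<and> W w x > 0))"

definition kernel_order :: "(real \<Rightarrow> real \<Rightarrow> real) \<Rightarrow> real \<Rightarrow> real \<Rightarrow> bool" where
  "kernel_order W x y \<longleftrightarrow> x \<in> {0..1} \<and> y \<in> {0..1} \<and> null_two_cycles W x \<and> null_two_cycles W y \<and>
     density_point (in_support W y) x \<and> density_point (out_support W x) y \<and>
     (AE w in unitI. W w x > 0 \<longrightarrow> W w y = 1) \<and> (AE w in unitI. W y w > 0 \<longrightarrow> W x w = 1)"

definition kernel_version :: "(real \<Rightarrow> real \<Rightarrow> real) \<Rightarrow> real \<Rightarrow> real \<Rightarrow> real" where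
  "kernel_version W x y =
     (if kernel_order W x y then if density_point (saturated_in W y) x then 1 else W x y else 0)"

lemma sets_borel_Collect_unitI:
  assumes "f \<in> borel_measurable unitI" and "Measurable.pred borel Q"
  shows "{w \<in> {0..1}. Q (f w)} \<in> sets borel"
proof -
  have "{w \<in> space unitI. Q (f w)} \<in> sets unitI" using assms by measurable
  then show ?thesis by (simp add: sets_unitI_iff)
qed

lemma measurable_fst_unitI[measurable]: "fst \<in> borel_measurable (unitI \<Otimes>\<^sub>M unitI)"
  and measurable_snd_unitI[measurable]: "snd \<in> borel_measurable (unitI \<Otimes>\<^sub>M unitI)"
  by (auto intro: measurable_compose[OF measurable_fst measurable_borel_unitI]
                  measurable_compose[OF measurable_snd measurable_borel_unitI])

context
  fixes W :: "real \<Rightarrow> real \<Rightarrow> real"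
  assumes W_measurable[measurable]: "(\<lambda>(x,y). W x y) \<in> borel_measurable (unitI \<Otimes>\<^sub>M unitI)"
begin

lemma in_support_borel: "y \<in> {0..1} \<Longrightarrow> in_support W y \<in> sets borel"
  and saturated_in_borel: "y \<in> {0..1} \<Longrightarrow> saturated_in W y \<in> sets borel"
  and out_support_borel: "x \<in> {0..1} \<Longrightarrow> out_support W x \<in> sets borel"
  unfolding in_support_def saturated_in_def out_support_def
  by (rule sets_borel_Collect_unitI; (rule measurable_Pair_compose_split[OF W_measurable])?; simp)+

lemma kernel_order_trans:
  assumes xy: "kernel_order W x y" and yz: "kernel_order W y z"
  shows "kernel_order W x z \<and> density_point (saturated_in W z) x"
proof -
  have x: "x \<in> {0..1}" and y: "y \<in> {0..1}" and z: "z \<in> {0..1}"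
    using xy yz by (auto simp: kernel_order_def)
  have in_y: "density_point (in_support W y) x" and in_x: "AE w in unitI. W w x > 0 \<longrightarrow> W w y = 1"
    and out_y: "AE w in unitI. W y w > 0 \<longrightarrow> W x w = 1"
    using xy by (auto simp: kernel_order_def)
  have out_z: "density_point (out_support W y) z" and in_y': "AE w in unitI. W w y > 0 \<longrightarrow> W w z = 1"
    and out_z': "AE w in unitI. W z w > 0 \<longrightarrow> W y w = 1"
    using yz by (auto simp: kernel_order_def)
  have saturated: "density_point (saturated_in W z) x"
  proof (rule density_point_AE_mono[OF in_support_borel[OF y] saturated_in_borel[OF z] _ in_y])
    show "AE w in lborel. w \<in> in_support W y \<longrightarrow> w \<in> saturated_in W z"
      using in_y' unfolding AE_unitI by eventually_elim (auto simp: in_support_def saturated_in_def)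
  qed
  have "density_point (in_support W z) x"
    by (rule density_point_AE_mono[OF saturated_in_borel[OF z] in_support_borel[OF z] _ saturated])
       (auto simp: saturated_in_def in_support_def)
  moreover have "density_point (out_support W x) z"
  proof (rule density_point_AE_mono[OF out_support_borel[OF y] out_support_borel[OF x] _ out_z])
    show "AE w in lborel. w \<in> out_support W y \<longrightarrow> w \<in> out_support W x"
      using out_y unfolding AE_unitI by eventually_elim (auto simp: out_support_def)
  qed
  moreover have "AE w in unitI. W w x > 0 \<longrightarrow> W w z = 1"
    using in_x in_y' by eventually_elim auto
  moreover have "AE w in unitI. W z w > 0 \<longrightarrow> W x w = 1"
    using out_y out_z' by eventually_elim auto
  ultimately show ?thesis
    using xy yz saturated by (auto simp: kernel_order_def)
qed

lemma kernel_order_irrefl: "\<not> kernel_order W x x"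
proof
  assume "kernel_order W x x"
  then have x: "x \<in> {0..1}" and null: "null_two_cycles W x"
    and "density_point (in_support W x) x" "density_point (out_support W x) x"
    by (auto simp: kernel_order_def)
  moreover have "AE w in lborel. \<not> (w \<in> out_support W x \<and> w \<in> in_support W x)"
    using null unfolding null_two_cycles_def AE_unitI
    by eventually_elim (auto simp: out_support_def in_support_def)
  ultimately show False
    using density_point_AE_disjoint[OF out_support_borel[OF x] in_support_borel[OF x]] by blast
qed

lemma pred_density_point_in_support[measurable]:
  "Measurable.pred (unitI \<Otimes>\<^sub>M unitI) (\<lambda>p. density_point (in_support W (snd p)) (fst p))"
  unfolding in_support_def
  by (rule pred_density_point_section[where R="\<lambda>p w. W w (snd p) > 0"]) measurable

lemma pred_kernel_order[measurable]:
  "Measurable.pred (unitI \<Otimes>\<^sub>M unitI) (\<lambda>p. kernel_order W (fst p) (snd p))"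
proof -
  have [measurable]: "Measurable.pred unitI (null_two_cycles W)"
    unfolding null_two_cycles_def by (rule pred_AE_unitI) measurable
  have [measurable]: "Measurable.pred (unitI \<Otimes>\<^sub>M unitI) (\<lambda>p. density_point (out_support W (fst p)) (snd p))"
    unfolding out_support_def by (rule pred_density_point_section[where R="\<lambda>p w. W (fst p) w > 0"]) measurable
  have [measurable]: "Measurable.pred (unitI \<Otimes>\<^sub>M unitI) (\<lambda>p. AE w in unitI. W w (fst p) > 0 \<longrightarrow> W w (snd p) = 1)"
    by (rule pred_AE_unitI[where R="\<lambda>p w. W w (fst p) > 0 \<longrightarrow> W w (snd p) = 1"]) measurable
  have [measurable]: "Measurable.pred (unitI \<Otimes>\<^sub>M unitI) (\<lambda>p. AE w in unitI. W (snd p) w > 0 \<longrightarrow> W (fst p) w = 1)"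
    by (rule pred_AE_unitI[where R="\<lambda>p w. W (snd p) w > 0 \<longrightarrow> W (fst p) w = 1"]) measurable
  have "Measurable.pred (unitI \<Otimes>\<^sub>M unitI) (\<lambda>p. null_two_cycles W (fst p) \<and> null_two_cycles W (snd p) \<and>
      density_point (in_support W (snd p)) (fst p) \<and> density_point (out_support W (fst p)) (snd p) \<and>
      (AE w in unitI. W w (fst p) > 0 \<longrightarrow> W w (snd p) = 1) \<and> (AE w in unitI. W (snd p) w > 0 \<longrightarrow> W (fst p) w = 1))"
    by measurable
  then show ?thesis
    by (rule measurable_cong[THEN iffD1, rotated]) (auto simp: kernel_order_def space_pair_measure)
qed

lemma pred_density_point_saturated_in[measurable]:
  "Measurable.pred (unitI \<Otimes>\<^sub>M unitI) (\<lambda>p. density_point (saturated_in W (snd p)) (fst p))"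
  unfolding saturated_in_def
  by (rule pred_density_point_section[where R="\<lambda>p w. W w (snd p) = 1"]) measurable

lemma kernel_version_measurable:
  "(\<lambda>(x,y). kernel_version W x y) \<in> borel_measurable (unitI \<Otimes>\<^sub>M unitI)"
  unfolding kernel_version_def case_prod_beta by measurable

lemma AE_AE_density_point_out_support:
  "AE x in unitI. AE y in unitI. W x y > 0 \<longrightarrow> density_point (out_support W x) y"
proof (rule AE_I2)
  fix x assume "x \<in> space unitI"
  then have "AE y in lborel. y \<in> out_support W x \<longrightarrow> density_point (out_support W x) y"
    by (intro AE_density_point out_support_borel) simp
  then show "AE y in unitI. W x y > 0 \<longrightarrow> density_point (out_support W x) y"
    unfolding AE_unitI by eventually_elim (auto simp: out_support_def)
qed

lemma AE_AE_density_point_in_support: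
  "AE x in unitI. AE y in unitI. W x y > 0 \<longrightarrow> density_point (in_support W y) x"
proof (rule unitI_pair.AE_commute[THEN iffD2])
  show "{p \<in> space (unitI \<Otimes>\<^sub>M unitI). 0 < W (fst p) (snd p) \<longrightarrow> density_point (in_support W (snd p)) (fst p)}
      \<in> sets (unitI \<Otimes>\<^sub>M unitI)"
    by measurable
  show "AE y in unitI. AE x in unitI. W x y > 0 \<longrightarrow> density_point (in_support W y) x"
  proof (rule AE_I2)
    fix y assume "y \<in> space unitI"
    then have "AE x in lborel. x \<in> in_support W y \<longrightarrow> density_point (in_support W y) x"
      by (intro AE_density_point in_support_borel) simp
    then show "AE x in unitI. W x y > 0 \<longrightarrow> density_point (in_support W y) x"
      unfolding AE_unitI by eventually_elim (auto simp: in_support_def)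
  qed
qed

lemma AE_AE_density_point_saturated_in:
  "AE x in unitI. AE y in unitI. density_point (saturated_in W y) x \<longrightarrow> W x y = 1"
proof (rule unitI_pair.AE_commute[THEN iffD2])
  show "{p \<in> space (unitI \<Otimes>\<^sub>M unitI). density_point (saturated_in W (snd p)) (fst p) \<longrightarrow> W (fst p) (snd p) = 1}
      \<in> sets (unitI \<Otimes>\<^sub>M unitI)"
    by measurable
  show "AE y in unitI. AE x in unitI. density_point (saturated_in W y) x \<longrightarrow> W x y = 1"
  proof (rule AE_I2)
    fix y assume "y \<in> space unitI"
    then have "AE x in lborel. density_point (saturated_in W y) x \<longrightarrow> x \<in> saturated_in W y"
      by (intro AE_density_point_imp_mem saturated_in_borel) simp
    then show "AE x in unitI. density_point (saturated_in W y) x \<longrightarrow> W x y = 1"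
      unfolding AE_unitI by eventually_elim (auto simp: saturated_in_def)
  qed
qed

lemma AE_AE_eq_kernel_version:
  assumes range: "\<forall>x\<in>{0..1}. \<forall>y\<in>{0..1}. 0 \<le> W x y \<and> W x y \<le> 1"
    and out_trans: "AE x in unitI. AE y in unitI. W x y > 0 \<longrightarrow> (AE z in unitI. W y z > 0 \<longrightarrow> W x z = 1)"
    and in_trans: "AE x in unitI. AE y in unitI. W x y > 0 \<longrightarrow> (AE w in unitI. W w x > 0 \<longrightarrow> W w y = 1)"
    and two_cycles: "AE x in unitI. null_two_cycles W x"
  shows "AE x in unitI. AE y in unitI. W x y = kernel_version W x y"
proof -
  have unit: "AE x in unitI. x \<in> {0..1}" by (rule AE_I2) simp
  show ?thesis
    using two_cycles AE_AE_density_point_out_support AE_AE_density_point_in_support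
      AE_AE_density_point_saturated_in out_trans in_trans unit
  proof eventually_elim
    case (elim x)
    note x_props = elim
    show ?case
      using x_props(2-6) two_cycles unit
    proof eventually_elim
      case (elim y)
      show ?case
      proof (cases "W x y > 0")
        case True
        then have "kernel_order W x y"
          using x_props elim by (auto simp: kernel_order_def)
        then show ?thesis using elim True by (auto simp: kernel_version_def)
      next
        case False
        then have "W x y = 0" using range x_props(7) elim(7) by force
        then show ?thesis using elim by (auto simp: kernel_version_def)
      qed
    qed
  qed
qed

lemma ordered_unitI_kernel_order: "ordered_unitI (kernel_order W)"
  unfolding ordered_unitI_def strict_po_on_def
proof (intro conjI ballI impI)
  show "\<not> kernel_order W x x" for x by (rule kernel_order_irrefl)
  show "kernel_order W x z" if "kernel_order W x y \<and> kernel_order W y z" for x y z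
    using kernel_order_trans that by blast
  have "{(x,y) \<in> {0..1}\<times>{0..1}. kernel_order W x y} = {p \<in> space (unitI \<Otimes>\<^sub>M unitI). kernel_order W (fst p) (snd p)}"
    by (auto simp: space_pair_measure)
  then show "{(x,y) \<in> {0..1}\<times>{0..1}. kernel_order W x y} \<in> sets (unitI \<Otimes>\<^sub>M unitI)"
    using pred_kernel_order by (simp add: pred_def)
qed

lemma is_kernel_kernel_version:
  assumes range: "\<forall>x\<in>{0..1}. \<forall>y\<in>{0..1}. 0 \<le> W x y \<and> W x y \<le> 1"
  shows "is_kernel (kernel_order W) (kernel_version W)"
  unfolding is_kernel_def
proof (intro conjI ballI impI kernel_version_measurable)
  fix x y z :: real
  assume "x \<in> {0..1}" "y \<in> {0..1}"
  then show "0 \<le> kernel_version W x y" "kernel_version W x y \<le> 1"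
    using range by (auto simp: kernel_version_def)
  show "kernel_version W x y > 0 \<Longrightarrow> kernel_order W x y"
    by (auto simp: kernel_version_def split: if_splits)
  assume "kernel_version W x y > 0 \<and> kernel_version W y z > 0"
  then have "kernel_order W x y" "kernel_order W y z"
    by (auto simp: kernel_version_def split: if_splits)
  then show "kernel_version W x z = 1"
    using kernel_order_trans by (simp add: kernel_version_def)
qed

lemma kernel_of_AE_transitive:
  assumes range: "\<forall>x\<in>{0..1}. \<forall>y\<in>{0..1}. 0 \<le> W x y \<and> W x y \<le> 1"
    and out_trans: "AE x in unitI. AE y in unitI. W x y > 0 \<longrightarrow> (AE z in unitI. W y z > 0 \<longrightarrow> W x z = 1)"
    and in_trans: "AE x in unitI. AE y in unitI. W x y > 0 \<longrightarrow> (AE w in unitI. W w x > 0 \<longrightarrow> W w y = 1)"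
    and two_cycles: "AE x in unitI. null_two_cycles W x"
  shows "\<exists>prec W'. ordered_unitI prec \<and> is_kernel prec W' \<and>
           (AE p in unitI \<Otimes>\<^sub>M unitI. W (fst p) (snd p) = W' (fst p) (snd p))"
proof (intro exI conjI)
  show "ordered_unitI (kernel_order W)" by (rule ordered_unitI_kernel_order)
  show "is_kernel (kernel_order W) (kernel_version W)" using range by (rule is_kernel_kernel_version)
  have [measurable]: "(\<lambda>(x, y). kernel_version W x y) \<in> borel_measurable (unitI \<Otimes>\<^sub>M unitI)"
    by (rule kernel_version_measurable)
  show "AE p in unitI \<Otimes>\<^sub>M unitI. W (fst p) (snd p) = kernel_version W (fst p) (snd p)"
    by (rule unitI_pair.AE_pair_iff[THEN iffD1, OF _ AE_AE_eq_kernel_version[OF assms]]) measurable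
qed

end

abbreviation unitI_Pi :: "'i set \<Rightarrow> ('i \<Rightarrow> real) measure" where
  "unitI_Pi I \<equiv> PiM I (\<lambda>_. unitI)"

abbreviation unitI3 :: "(nat \<Rightarrow> real) measure" where
  "unitI3 \<equiv> unitI_Pi {1..3}"

lemma prob_space_unitI_Pi: "prob_space (unitI_Pi I)"
  by (rule prob_space_PiM) (simp add: prob_space_unitI)

lemma space_unitI_Pi: "x \<in> space (unitI_Pi I) \<Longrightarrow> i \<in> I \<Longrightarrow> x i \<in> {0..1}"
  by (auto simp: space_PiM)

lemma measurable_unitI_Pi_component[measurable]: "i \<in> I \<Longrightarrow> (\<lambda>x. x i) \<in> measurable (unitI_Pi I) unitI"
  by (rule measurable_component_singleton)

interpretation unitI3: prob_space unitI3 by (rule prob_space_unitI_Pi)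

interpretation unitI_product: product_sigma_finite "\<lambda>_::nat. unitI"
  by (simp add: product_sigma_finite_def unitI.sigma_finite_measure_axioms)

lemma measurable_reindex_unitI_Pi:
  "f \<in> I \<rightarrow> K \<Longrightarrow> (\<lambda>\<omega>. \<lambda>n\<in>I. \<omega> (f n)) \<in> measurable (unitI_Pi K) (unitI_Pi I)"
  by (intro measurable_restrict measurable_component_singleton) auto

lemma distr_reindex_unitI_Pi:
  "inj_on f I \<Longrightarrow> f \<in> I \<rightarrow> K \<Longrightarrow> distr (unitI_Pi K) (unitI_Pi I) (\<lambda>\<omega>. \<lambda>n\<in>I. \<omega> (f n)) = unitI_Pi I"
  using distr_PiM_reindex[of K "\<lambda>_. unitI" f I] by (simp add: prob_space_unitI)

lemma AE_unitI_Pi_reindex: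
  assumes "inj_on f I" "f \<in> I \<rightarrow> K" and "AE x in unitI_Pi I. Q x"
  shows "AE \<omega> in unitI_Pi K. Q (\<lambda>n\<in>I. \<omega> (f n))"
proof -
  have "AE x in distr (unitI_Pi K) (unitI_Pi I) (\<lambda>\<omega>. \<lambda>n\<in>I. \<omega> (f n)). Q x"
    unfolding distr_reindex_unitI_Pi[OF assms(1,2)] by (rule assms(3))
  then show ?thesis by (rule AE_distrD[OF measurable_reindex_unitI_Pi[OF assms(2)]])
qed

lemma AE_unitI_Pi_of_reindex:
  assumes "inj_on f I" "f \<in> I \<rightarrow> K" and Q: "Measurable.pred (unitI_Pi I) Q"
    and AE: "AE \<omega> in unitI_Pi K. Q (\<lambda>n\<in>I. \<omega> (f n))"
  shows "AE x in unitI_Pi I. Q x"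
proof -
  have "AE x in distr (unitI_Pi K) (unitI_Pi I) (\<lambda>\<omega>. \<lambda>n\<in>I. \<omega> (f n)). Q x"
    by (subst AE_distr_iff[OF measurable_reindex_unitI_Pi[OF assms(2)]])
       (use Q AE in \<open>auto simp: pred_def\<close>)
  then show ?thesis unfolding distr_reindex_unitI_Pi[OF assms(1,2)] .
qed

lemma AE_unitI3_permute:
  assumes f: "bij_betw f {1..3::nat} {1..3}" and AE: "AE x in unitI3. Q (x 1) (x 2) (x 3)"
  shows "AE x in unitI3. Q (x (f 1)) (x (f 2)) (x (f 3))"
proof -
  have "f 1 \<in> {1..3}" "f 2 \<in> {1..3}" "f 3 \<in> {1..3}"
    using f by (auto simp: bij_betw_def)
  moreover have "AE x in unitI3. (\<lambda>x. Q (x 1) (x 2) (x 3)) (\<lambda>n\<in>{1..3}. x (f n))"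
    using f AE by (intro AE_unitI_Pi_reindex) (auto simp: bij_betw_def)
  ultimately show ?thesis by simp
qed

lemma AE_unitI_Pi_singleton:
  assumes "AE y in unitI_Pi {i::nat}. Q y"
  shows "AE a in unitI. Q (\<lambda>j\<in>{i}. a)"
proof -
  have "AE y in distr unitI (unitI_Pi {i}) (\<lambda>a. \<lambda>j\<in>{i}. a). Q y"
    by (subst unitI_product.distr_component[of i]) (rule assms)
  moreover have "(\<lambda>a. \<lambda>j\<in>{i}. a) \<in> measurable unitI (unitI_Pi {i})"
    by (rule measurable_restrict) simp
  ultimately show ?thesis by (rule AE_distrD[rotated])
qed

lemma AE_unitI_Pi_insert:
  fixes i :: nat
  assumes i: "i \<notin> J" "finite J" and AE: "AE x in unitI_Pi (insert i J). Q x"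
  shows "AE a in unitI. AE y in unitI_Pi J. Q (merge {i} J (\<lambda>j\<in>{i}. a, y))"
proof -
  interpret pair_sigma_finite "unitI_Pi {i}" "unitI_Pi J"
  proof -
    interpret A: finite_product_sigma_finite "\<lambda>_::nat. unitI" "{i}" by standard simp
    interpret B: finite_product_sigma_finite "\<lambda>_::nat. unitI" J by standard (simp add: i)
    show "pair_sigma_finite (unitI_Pi {i}) (unitI_Pi J)" ..
  qed
  have "{i} \<union> J = insert i J" by auto
  moreover have "distr (unitI_Pi {i} \<Otimes>\<^sub>M unitI_Pi J) (unitI_Pi ({i} \<union> J)) (merge {i} J) = unitI_Pi ({i} \<union> J)"
    by (rule unitI_product.distr_merge) (use i in auto)
  ultimately have "AE x in distr (unitI_Pi {i} \<Otimes>\<^sub>M unitI_Pi J) (unitI_Pi ({i} \<union> J)) (merge {i} J). Q x"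
    using AE by (simp only:)
  then have "AE z in unitI_Pi {i} \<Otimes>\<^sub>M unitI_Pi J. Q (merge {i} J z)"
    by (rule AE_distrD[OF measurable_merge])
  then have "AE x in unitI_Pi {i}. AE y in unitI_Pi J. Q (merge {i} J (x, y))"
    by (rule AE_pair)
  then show ?thesis by (rule AE_unitI_Pi_singleton)
qed

lemma AE_unitI3_iterated:
  assumes "AE x in unitI3. R (x 1) (x 2) (x 3)"
  shows "AE a in unitI. AE b in unitI. AE c in unitI. R a b c"
proof -
  have "{1..3::nat} = insert 1 {2,3}" by auto
  then have "AE a in unitI. AE y in unitI_Pi {2,3::nat}. R a (y 2) (y 3)"
    using AE_unitI_Pi_insert[of 1 "{2,3::nat}" "\<lambda>x. R (x 1) (x 2) (x 3)"] assms
    by (simp only:) (simp add: merge_def)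
  then show ?thesis
  proof eventually_elim
    case (elim a)
    then have "AE b in unitI. AE y in unitI_Pi {3::nat}. R a b (y 3)"
      using AE_unitI_Pi_insert[of 2 "{3::nat}" "\<lambda>y. R a (y 2) (y 3)"] by (simp add: merge_def)
    then show ?case
      by eventually_elim (use AE_unitI_Pi_singleton in fastforce)
  qed
qed

lemma space_sample_space: "\<omega> \<in> space sample_space \<Longrightarrow> \<omega> i \<in> {0..1}"
  by (auto simp: sample_space_def space_PiM)

lemma AE_sample_space_pair:
  assumes ij: "i \<noteq> j" and AE: "AE p in unitI \<Otimes>\<^sub>M unitI. Q (fst p) (snd p)"
  shows "AE \<omega> in sample_space. Q (\<omega> (Inl i)) (\<omega> (Inl j))"
proof -
  define f where "f b = (if b then Inl i else Inl j :: nat + nat \<times> nat)" for b :: bool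
  have inj: "inj_on f UNIV" using ij by (auto simp: inj_on_def f_def split: if_splits)
  have "case_bool unitI unitI = (\<lambda>_. unitI)" by (rule ext) (simp split: bool.split)
  then have eq: "unitI \<Otimes>\<^sub>M unitI = distr (unitI_Pi UNIV) (unitI \<Otimes>\<^sub>M unitI) (\<lambda>x. (x True, x False))"
    using pair_measure_eq_distr_PiM[of unitI unitI] by (simp add: unitI.sigma_finite_measure_axioms)
  have m: "(\<lambda>x. (x True, x False)) \<in> measurable (unitI_Pi UNIV) (unitI \<Otimes>\<^sub>M unitI)"
    by (intro measurable_Pair measurable_component_singleton) auto
  have "AE p in distr (unitI_Pi UNIV) (unitI \<Otimes>\<^sub>M unitI) (\<lambda>x. (x True, x False)). Q (fst p) (snd p)"
    unfolding eq[symmetric] by (rule AE)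
  then have "AE x in unitI_Pi UNIV. Q (x True) (x False)"
    using AE_distrD[OF m] by fastforce
  from AE_unitI_Pi_reindex[OF inj _ this, of UNIV] show ?thesis
    unfolding sample_space_def by (simp add: f_def)
qed

section \<open>Almost everywhere transitivity from three-point configurations\<close>

lemma AE_out_transitive:
  assumes "AE x in unitI3. W (x 1) (x 2) > 0 \<and> W (x 2) (x 3) > 0 \<longrightarrow> W (x 1) (x 3) = 1"
  shows "AE x in unitI. AE y in unitI. W x y > 0 \<longrightarrow> (AE z in unitI. W y z > 0 \<longrightarrow> W x z = 1)"
  using AE_unitI3_iterated[OF assms]
proof eventually_elim
  case (elim x)
  then show ?case by eventually_elim (auto elim: eventually_mono)
qed

lemma AE_in_transitive:
  assumes "AE x in unitI3. W (x 1) (x 2) > 0 \<and> W (x 2) (x 3) > 0 \<longrightarrow> W (x 1) (x 3) = 1"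
  shows "AE x in unitI. AE y in unitI. W x y > 0 \<longrightarrow> (AE w in unitI. W w x > 0 \<longrightarrow> W w y = 1)"
proof -
  define f where "f n = (if n = 1 then 3 else if n = 2 then 1 else if n = 3 then 2 else n)" for n :: nat
  have "{1..3::nat} = {1,2,3}" by auto
  then have "bij_betw f {1..3::nat} {1..3}" unfolding f_def bij_betw_def inj_on_def by auto
  from AE_unitI3_permute[OF this assms]
  have "AE x in unitI3. W (x 3) (x 1) > 0 \<and> W (x 1) (x 2) > 0 \<longrightarrow> W (x 3) (x 2) = 1"
    by (simp add: f_def)
  from AE_unitI3_iterated[OF this] show ?thesis
  proof eventually_elim
    case (elim x)
    then show ?case by eventually_elim (auto elim: eventually_mono)
  qed
qed

text \<open>A two-cycle \<open>x \<leftrightarrow> y\<close> next to a two-cycle \<open>x \<leftrightarrow> z\<close> forces \<open>W y z = W z y = 1\<close>, a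
  directed triangle; so for almost every \<open>y\<close>, either almost no \<open>z\<close> forms a two-cycle with \<open>y\<close>,
  or almost no \<open>x\<close> does.\<close>
lemma AE_null_two_cycles:
  assumes trans: "AE x in unitI3. W (x 1) (x 2) > 0 \<and> W (x 2) (x 3) > 0 \<longrightarrow> W (x 1) (x 3) = 1"
    and triangle: "AE x in unitI3. W (x 1) (x 2) * W (x 2) (x 3) * W (x 3) (x 1) = 0"
  shows "AE x in unitI. null_two_cycles W x"
proof -
  define C where "C a b \<longleftrightarrow> W a b > 0 \<and> W b a > 0" for a b
  have "{1..3::nat} = {1,2,3}" by auto
  then have b312: "bij_betw (\<lambda>n::nat. if n = 1 then 3 else if n = 2 then 1 else if n = 3 then 2 else n) {1..3} {1..3}"
    and b213: "bij_betw (\<lambda>n::nat. if n = 1 then 2 else if n = 2 then 1 else n) {1..3} {1..3}"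
    unfolding bij_betw_def inj_on_def by auto
  have "AE x in unitI3. W (x 2) (x 1) > 0 \<and> W (x 1) (x 3) > 0 \<longrightarrow> W (x 2) (x 3) = 1"
    using AE_unitI3_permute[OF b213 trans] by simp
  moreover have "AE x in unitI3. W (x 3) (x 1) > 0 \<and> W (x 1) (x 2) > 0 \<longrightarrow> W (x 3) (x 2) = 1"
    using AE_unitI3_permute[OF b312 trans] by simp
  moreover have "AE x in unitI3. W (x 2) (x 1) * W (x 1) (x 3) * W (x 3) (x 2) = 0"
    using AE_unitI3_permute[OF b213 triangle] by simp
  ultimately have "AE x in unitI3. \<not> (C (x 2) (x 1) \<and> C (x 1) (x 3))"
    by eventually_elim (auto simp: C_def)
  from AE_unitI3_iterated[OF this]
  have "AE y in unitI. AE x in unitI. \<not> C x y"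
  proof eventually_elim
    case (elim y)
    show ?case
    proof (cases "AE z in unitI. \<not> C y z")
      case True
      then show ?thesis by eventually_elim (auto simp: C_def)
    next
      case False
      from elim have "AE x in unitI. C x y \<longrightarrow> (AE z in unitI. \<not> C y z)"
        by eventually_elim (auto elim: eventually_mono)
      then show ?thesis by eventually_elim (use False in auto)
    qed
  qed
  then show ?thesis
    unfolding null_two_cycles_def by eventually_elim (auto simp: C_def)
qed

lemma hom_density_conditions_iff_AE:
  fixes W :: "real \<Rightarrow> real \<Rightarrow> real"
  assumes meas[measurable]: "(\<lambda>(x,y). W x y) \<in> borel_measurable (unitI \<Otimes>\<^sub>M unitI)"
    and range: "\<forall>x\<in>{0..1}. \<forall>y\<in>{0..1}. 0 \<le> W x y \<and> W x y \<le> 1"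
  shows "(hom_density 3 D1 W = hom_density 3 D2 W \<and> hom_density 3 D3 W = 0) \<longleftrightarrow>
    ((AE x in unitI3. W (x 1) (x 2) * W (x 2) (x 3) * (1 - W (x 1) (x 3)) = 0) \<and>
     (AE x in unitI3. W (x 1) (x 2) * W (x 2) (x 3) * W (x 3) (x 1) = 0))"
proof -
  have W01: "0 \<le> W (x i) (x j) \<and> W (x i) (x j) \<le> 1"
    if "x \<in> space unitI3" "i \<in> {1..3}" "j \<in> {1..3}" for x i j
    using range space_unitI_Pi[OF that(1,2)] space_unitI_Pi[OF that(1,3)] by blast
  have D1: "hom_density 3 D1 W = (\<integral>x. W (x 1) (x 2) * W (x 2) (x 3) \<partial>unitI3)"
    by (simp add: hom_density_def D1_def)
  have D2: "hom_density 3 D2 W = (\<integral>x. W (x 1) (x 2) * W (x 2) (x 3) * W (x 1) (x 3) \<partial>unitI3)"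
    by (simp add: hom_density_def D2_def mult.assoc)
  have D3: "hom_density 3 D3 W = (\<integral>x. W (x 1) (x 2) * W (x 2) (x 3) * W (x 3) (x 1) \<partial>unitI3)"
    by (simp add: hom_density_def D3_def mult.assoc)
  have integrable: "integrable unitI3 (\<lambda>x. W (x 1) (x 2) * W (x 2) (x 3) * g x)"
    if g: "g \<in> borel_measurable unitI3" "\<And>x. x \<in> space unitI3 \<Longrightarrow> \<bar>g x\<bar> \<le> 1" for g
  proof (rule unitI3.integrable_const_bound[where B=1])
    show "AE x in unitI3. norm (W (x 1) (x 2) * W (x 2) (x 3) * g x) \<le> 1"
    proof (rule AE_I2)
      fix x assume x: "x \<in> space unitI3"
      have "\<bar>W (x 1) (x 2) * W (x 2) (x 3) * g x\<bar> = \<bar>W (x 1) (x 2)\<bar> * \<bar>W (x 2) (x 3)\<bar> * \<bar>g x\<bar>"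
        by (simp add: abs_mult)
      also have "\<dots> \<le> 1 * 1 * 1"
        using W01[OF x] g(2)[OF x] by (intro mult_mono) auto
      finally show "norm (W (x 1) (x 2) * W (x 2) (x 3) * g x) \<le> 1" by simp
    qed
  qed (use g in measurable)
  have i1: "integrable unitI3 (\<lambda>x. W (x 1) (x 2) * W (x 2) (x 3) * 1)"
    and i2: "integrable unitI3 (\<lambda>x. W (x 1) (x 2) * W (x 2) (x 3) * W (x 1) (x 3))"
    and i3: "integrable unitI3 (\<lambda>x. W (x 1) (x 2) * W (x 2) (x 3) * W (x 3) (x 1))"
    and i4: "integrable unitI3 (\<lambda>x. W (x 1) (x 2) * W (x 2) (x 3) * (1 - W (x 1) (x 3)))"
    by (rule integrable; use W01 in \<open>force simp: abs_le_iff\<close>)+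
  have "hom_density 3 D1 W - hom_density 3 D2 W =
      (\<integral>x. W (x 1) (x 2) * W (x 2) (x 3) * (1 - W (x 1) (x 3)) \<partial>unitI3)"
    using i1 i2 unfolding D1 D2
    by (subst Bochner_Integration.integral_diff[symmetric]) (simp_all add: algebra_simps)
  moreover have "(\<integral>x. W (x 1) (x 2) * W (x 2) (x 3) * (1 - W (x 1) (x 3)) \<partial>unitI3) = 0 \<longleftrightarrow>
       (AE x in unitI3. W (x 1) (x 2) * W (x 2) (x 3) * (1 - W (x 1) (x 3)) = 0)"
    by (rule integral_nonneg_eq_0_iff_AE[OF i4]) (rule AE_I2, use W01 in auto)
  moreover have "(\<integral>x. W (x 1) (x 2) * W (x 2) (x 3) * W (x 3) (x 1) \<partial>unitI3) = 0 \<longleftrightarrow>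
       (AE x in unitI3. W (x 1) (x 2) * W (x 2) (x 3) * W (x 3) (x 1) = 0)"
    by (rule integral_nonneg_eq_0_iff_AE[OF i3]) (rule AE_I2, use W01 in auto)
  ultimately show ?thesis using D3 by auto
qed

section \<open>Random graphs from a kernel are posets\<close>

lemma rand_is_poset_of_kernel:
  assumes ord: "ordered_unitI prec" and ker: "is_kernel prec W'"
    and unit: "\<And>i. \<omega> i \<in> {0..1}" and labels: "\<And>p. \<omega> (Inr p) \<noteq> 1"
    and eq: "\<And>i j. i \<noteq> j \<Longrightarrow> W (\<omega> (Inl i)) (\<omega> (Inl j)) = W' (\<omega> (Inl i)) (\<omega> (Inl j))"
  shows "rand_is_poset W V \<omega>"
  unfolding rand_is_poset_def strict_po_on_def
proof (intro conjI ballI impI)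
  define X where "X i = \<omega> (Inl i)" for i
  have X: "X i \<in> {0..1}" for i using unit by (simp add: X_def)
  have po: "strict_po_on {0..1} prec" using ord by (simp add: ordered_unitI_def)
  have prec: "\<And>x y. x \<in> {0..1} \<Longrightarrow> y \<in> {0..1} \<Longrightarrow> W' x y > 0 \<Longrightarrow> prec x y"
    and saturate: "\<And>x y z. x \<in> {0..1} \<Longrightarrow> y \<in> {0..1} \<Longrightarrow> z \<in> {0..1} \<Longrightarrow>
                       W' x y > 0 \<Longrightarrow> W' y z > 0 \<Longrightarrow> W' x z = 1"
    using ker unfolding is_kernel_def by blast+
  have pos: "W' (X i) (X j) > 0" if "rand_edge W \<omega> i j" for i j
  proof -
    have "i \<noteq> j" "\<omega> (Inr (i,j)) < W (X i) (X j)" using that by (auto simp: rand_edge_def X_def)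
    moreover have "0 \<le> \<omega> (Inr (i,j))" using unit[of "Inr (i,j)"] by simp
    ultimately show ?thesis using eq by (fastforce simp: X_def)
  qed
  show "\<not> rand_edge W \<omega> x x" for x by (simp add: rand_edge_def)
  fix x y z :: nat assume "rand_edge W \<omega> x y \<and> rand_edge W \<omega> y z"
  then have xy: "W' (X x) (X y) > 0" and yz: "W' (X y) (X z) > 0" using pos by blast+
  have xz: "x \<noteq> z"
  proof
    assume "x = z"
    then have "prec (X x) (X x)"
      using po prec[OF X X xy] prec[OF X X yz] X unfolding strict_po_on_def by blast
    then show False using po X unfolding strict_po_on_def by blast
  qed
  then have "W (X x) (X z) = 1" using eq saturate[OF X X X xy yz] by (simp add: X_def)
  moreover have "\<omega> (Inr (x,z)) < 1" using unit[of "Inr (x,z)"] labels[of "(x,z)"] by auto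
  ultimately show "rand_edge W \<omega> x z" using xz by (simp add: rand_edge_def X_def)
qed

lemma kernel_imp_AE_rand_is_poset:
  assumes ord: "ordered_unitI prec" and ker: "is_kernel prec W'"
    and AE: "AE p in unitI \<Otimes>\<^sub>M unitI. W (fst p) (snd p) = W' (fst p) (snd p)"
  shows "AE \<omega> in sample_space. rand_is_poset W V \<omega>"
proof -
  have "AE \<omega> in sample_space. \<forall>ij::nat \<times> nat. fst ij \<noteq> snd ij \<longrightarrow>
      W (\<omega> (Inl (fst ij))) (\<omega> (Inl (snd ij))) = W' (\<omega> (Inl (fst ij))) (\<omega> (Inl (snd ij)))"
  proof (subst AE_all_countable, intro allI)
    fix ij :: "nat \<times> nat"
    show "AE \<omega> in sample_space. fst ij \<noteq> snd ij \<longrightarrow>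
      W (\<omega> (Inl (fst ij))) (\<omega> (Inl (snd ij))) = W' (\<omega> (Inl (fst ij))) (\<omega> (Inl (snd ij)))"
    proof (cases "fst ij = snd ij")
      case False
      from AE_sample_space_pair[OF False, of "\<lambda>a b. W a b = W' a b"] AE show ?thesis by simp
    qed simp
  qed
  moreover have "AE \<omega> in sample_space. \<forall>p. \<omega> (Inr p) \<noteq> 1"
  proof (subst AE_all_countable, intro allI)
    fix p
    have "AE x in unitI. x \<noteq> 1"
      unfolding AE_unitI using AE_lborel_singleton[of 1] by eventually_elim auto
    then show "AE \<omega> in sample_space. \<omega> (Inr p) \<noteq> 1"
      unfolding sample_space_def by (rule AE_PiM_component[rotated 2]) (auto simp: prob_space_unitI)
  qed
  moreover have "AE \<omega> in sample_space. \<omega> \<in> space sample_space" by (rule AE_I2)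
  ultimately show ?thesis
  proof eventually_elim
    case (elim \<omega>)
    then show ?case
      by (intro rand_is_poset_of_kernel[OF ord ker] space_sample_space) auto
  qed
qed

section \<open>Transitivity violations of \<open>P(\<infinity>,W)\<close> have probability zero\<close>

lemma nn_integral_unitI_indicator_less:
  "a \<in> {0..1} \<Longrightarrow> (\<integral>\<^sup>+ t. indicator {t. t < a} t \<partial>unitI) = ennreal a"
  and nn_integral_unitI_indicator_not_less:
  "a \<in> {0..1} \<Longrightarrow> (\<integral>\<^sup>+ t. indicator {t. \<not> t < a} t \<partial>unitI) = ennreal (1 - a)"
proof -
  assume a: "a \<in> {0..1}"
  have "(\<integral>\<^sup>+ t. indicator {t. t < a} t \<partial>unitI) = (\<integral>\<^sup>+ t. indicator {0..<a} t \<partial>unitI)"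
    by (rule nn_integral_cong) (auto simp: indicator_def)
  also have "\<dots> = emeasure unitI {0..<a}"
    using a by (intro nn_integral_indicator) (auto simp: sets_unitI_iff)
  also have "\<dots> = ennreal a"
    using a by (subst emeasure_unitI) (auto simp: sets_unitI_iff)
  finally show "(\<integral>\<^sup>+ t. indicator {t. t < a} t \<partial>unitI) = ennreal a" .
next
  assume a: "a \<in> {0..1}"
  have "(\<integral>\<^sup>+ t. indicator {t. \<not> t < a} t \<partial>unitI) = (\<integral>\<^sup>+ t. indicator {a..1} t \<partial>unitI)"
    using a by (intro nn_integral_cong) (auto simp: indicator_def)
  also have "\<dots> = emeasure unitI {a..1}"
    using a by (intro nn_integral_indicator) (auto simp: sets_unitI_iff)
  also have "\<dots> = ennreal (1 - a)"
    using a by (subst emeasure_unitI) (auto simp: sets_unitI_iff)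
  finally show "(\<integral>\<^sup>+ t. indicator {t. \<not> t < a} t \<partial>unitI) = ennreal (1 - a)" .
qed

lemma nn_integral_unitI_Pi_threshold:
  fixes a b c d :: real
  assumes "a \<in> {0..1}" "b \<in> {0..1}" "c \<in> {0..1}" "d \<in> {0..1}"
  shows "(\<integral>\<^sup>+ y. indicator {y. y 4 < a \<and> y 5 < b \<and> \<not> y 6 < c \<and> y 7 < d} y \<partial>unitI_Pi {4..7::nat})
    = ennreal (a * b * (1 - c) * d)"
proof -
  define G where "G n = (if n = 4 then indicator {t. t < a} else if n = 5 then indicator {t. t < b}
       else if n = 6 then indicator {t. \<not> t < c} else (indicator {t. t < d} :: real \<Rightarrow> ennreal))" for n :: nat
  have e47: "{4..7::nat} = {4,5,6,7}" by auto
  have pointwise: "indicator {y. y 4 < a \<and> y 5 < b \<and> \<not> y 6 < c \<and> y 7 < d} y = (\<Prod>n\<in>{4..7}. G n (y n))"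
    for y :: "nat \<Rightarrow> real"
    by (simp add: e47 G_def indicator_def)
  have "(\<integral>\<^sup>+ y. indicator {y. y 4 < a \<and> y 5 < b \<and> \<not> y 6 < c \<and> y 7 < d} y \<partial>unitI_Pi {4..7::nat})
      = (\<integral>\<^sup>+ y. (\<Prod>n\<in>{4..7}. G n (y n)) \<partial>unitI_Pi {4..7})"
    by (rule nn_integral_cong) (rule pointwise)
  also have "\<dots> = (\<Prod>n\<in>{4..7}. \<integral>\<^sup>+ t. G n t \<partial>unitI)"
  proof (rule unitI_product.product_nn_integral_prod)
    have "(indicator A :: real \<Rightarrow> ennreal) \<in> borel_measurable unitI" if "A \<in> sets borel" for A
      using that by (intro measurable_borel_unitI borel_measurable_indicator)
    then show "G n \<in> borel_measurable unitI" for n by (simp add: G_def)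
  qed simp
  also have "\<dots> = (\<integral>\<^sup>+ t. indicator {t. t < a} t \<partial>unitI) * ((\<integral>\<^sup>+ t. indicator {t. t < b} t \<partial>unitI) *
      ((\<integral>\<^sup>+ t. indicator {t. \<not> t < c} t \<partial>unitI) * (\<integral>\<^sup>+ t. indicator {t. t < d} t \<partial>unitI)))"
    by (simp add: e47 G_def)
  also have "\<dots> = ennreal a * (ennreal b * (ennreal (1 - c) * ennreal d))"
    using assms by (simp add: nn_integral_unitI_indicator_less nn_integral_unitI_indicator_not_less)
  also have "\<dots> = ennreal (a * b * (1 - c) * d)"
    using assms by (simp add: ennreal_mult mult.assoc)
  finally show ?thesis .
qed

text \<open>In the cube \<open>[0,1]\<^bsup>{1..7}\<^esup>\<close>, coordinates 1--3 play the vertex types \<open>X\<^sub>1, X\<^sub>2, X\<^sub>3\<close> and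
  coordinates 4--7 the edge labels \<open>\<xi>\<^sub>1\<^sub>2, \<xi>\<^sub>2\<^sub>3, \<xi>\<^sub>1\<^sub>3, \<xi>\<^sub>3\<^sub>1\<close>.\<close>
lemma emeasure_threshold_event:
  fixes g4 g5 g6 g7 :: "(nat \<Rightarrow> real) \<Rightarrow> real"
  assumes [measurable]: "g4 \<in> borel_measurable unitI3" "g5 \<in> borel_measurable unitI3"
      "g6 \<in> borel_measurable unitI3" "g7 \<in> borel_measurable unitI3"
    and range: "\<And>x. x \<in> space unitI3 \<Longrightarrow> g4 x \<in> {0..1} \<and> g5 x \<in> {0..1} \<and> g6 x \<in> {0..1} \<and> g7 x \<in> {0..1}"
  shows "emeasure (unitI_Pi {1..7}) {z \<in> space (unitI_Pi {1..7}). z 4 < g4 (restrict z {1..3}) \<and>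
            z 5 < g5 (restrict z {1..3}) \<and> \<not> z 6 < g6 (restrict z {1..3}) \<and> z 7 < g7 (restrict z {1..3})}
     = (\<integral>\<^sup>+ x. ennreal (g4 x * g5 x * (1 - g6 x) * g7 x) \<partial>unitI3)"
    (is "emeasure _ {z \<in> _. ?E z} = _")
proof -
  have [measurable]: "(\<lambda>z. restrict z {1..3}) \<in> measurable (unitI_Pi {1..7}) unitI3"
    by (rule measurable_restrict_subset) auto
  have [measurable]: "i \<in> {1..7} \<Longrightarrow> (\<lambda>z. z i) \<in> borel_measurable (unitI_Pi {1..7::nat})" for i
    by (rule measurable_compose[OF measurable_unitI_Pi_component measurable_borel_unitI]) auto
  have E: "{z \<in> space (unitI_Pi {1..7}). ?E z} \<in> sets (unitI_Pi {1..7})" by measurable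
  have split: "{1..7::nat} = {1..3} \<union> {4..7}" by auto
  have "emeasure (unitI_Pi {1..7}) {z \<in> space (unitI_Pi {1..7}). ?E z}
      = (\<integral>\<^sup>+ z. indicator {z \<in> space (unitI_Pi {1..7}). ?E z} z \<partial>unitI_Pi {1..7})"
    using E by simp
  also have "\<dots> = (\<integral>\<^sup>+ x. (\<integral>\<^sup>+ y. indicator {z \<in> space (unitI_Pi {1..7}). ?E z} (merge {1..3} {4..7} (x, y))
                      \<partial>unitI_Pi {4..7}) \<partial>unitI3)"
  proof -
    have "indicator {z \<in> space (unitI_Pi {1..7}). ?E z} \<in> borel_measurable (unitI_Pi ({1..3} \<union> {4..7}))"
      unfolding split[symmetric] using E by (rule borel_measurable_indicator)
    from unitI_product.product_nn_integral_fold[OF _ _ _ this] show ?thesis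
      by (simp only: split[symmetric]) simp
  qed
  also have "\<dots> = (\<integral>\<^sup>+ x. ennreal (g4 x * g5 x * (1 - g6 x) * g7 x) \<partial>unitI3)"
  proof (rule nn_integral_cong)
    fix x assume x: "x \<in> space unitI3"
    have "(\<integral>\<^sup>+ y. indicator {z \<in> space (unitI_Pi {1..7}). ?E z} (merge {1..3} {4..7} (x, y)) \<partial>unitI_Pi {4..7})
        = (\<integral>\<^sup>+ y. indicator {y. y 4 < g4 x \<and> y 5 < g5 x \<and> \<not> y 6 < g6 x \<and> y 7 < g7 x} y \<partial>unitI_Pi {4..7::nat})"
    proof (rule nn_integral_cong)
      fix y assume y: "y \<in> space (unitI_Pi {4..7::nat})"
      have "merge {1..3} {4..7} (x, y) \<in> space (unitI_Pi {1..7})"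
        using x y unfolding split by (auto simp: space_PiM PiE_iff)
      moreover have "restrict (merge {1..3} {4..7} (x, y)) {1..3} = x"
        using x by (simp add: space_PiM)
      ultimately show "indicator {z \<in> space (unitI_Pi {1..7}). ?E z} (merge {1..3} {4..7} (x, y))
          = indicator {y. y 4 < g4 x \<and> y 5 < g5 x \<and> \<not> y 6 < g6 x \<and> y 7 < g7 x} y"
        by (simp add: merge_def indicator_def)
    qed
    also have "\<dots> = ennreal (g4 x * g5 x * (1 - g6 x) * g7 x)"
      using range[OF x] by (intro nn_integral_unitI_Pi_threshold) auto
    finally show "(\<integral>\<^sup>+ y. indicator {z \<in> space (unitI_Pi {1..7}). ?E z} (merge {1..3} {4..7} (x, y)) \<partial>unitI_Pi {4..7})
        = ennreal (g4 x * g5 x * (1 - g6 x) * g7 x)" .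
  qed
  finally show ?thesis .
qed

lemma AE_threshold_event_null:
  fixes W :: "real \<Rightarrow> real \<Rightarrow> real"
  assumes [measurable]: "(\<lambda>(x,y). W x y) \<in> borel_measurable (unitI \<Otimes>\<^sub>M unitI)"
    and g67[measurable]: "g6 \<in> borel_measurable unitI3" "g7 \<in> borel_measurable unitI3"
    and range: "\<And>x. x \<in> space unitI3 \<Longrightarrow>
      W (x 1) (x 2) \<in> {0..1} \<and> W (x 2) (x 3) \<in> {0..1} \<and> g6 x \<in> {0..1} \<and> g7 x \<in> {0..1}"
    and AE: "AE \<omega> in sample_space. \<not> (\<omega> (Inr (1,2)) < W (\<omega> (Inl 1)) (\<omega> (Inl 2)) \<and>
      \<omega> (Inr (2,3)) < W (\<omega> (Inl 2)) (\<omega> (Inl 3)) \<and> \<not> \<omega> (Inr (1,3)) < g6 (\<lambda>n\<in>{1..3}. \<omega> (Inl n)) \<and>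
      \<omega> (Inr (3,1)) < g7 (\<lambda>n\<in>{1..3}. \<omega> (Inl n)))"
  shows "AE x in unitI3. W (x 1) (x 2) * W (x 2) (x 3) * (1 - g6 x) * g7 x = 0"
proof -
  define f where "f n = (if n \<le> 3 then Inl n else if n = 4 then Inr (1,2) else if n = 5 then Inr (2,3)
     else if n = 6 then Inr (1,3) else (Inr (3,1) :: nat + nat \<times> nat))" for n :: nat
  define g4 where "g4 x = W (x 1) (x 2)" for x :: "nat \<Rightarrow> real"
  define g5 where "g5 x = W (x 2) (x 3)" for x :: "nat \<Rightarrow> real"
  define E where "E z \<longleftrightarrow> z 4 < g4 (restrict z {1..3}) \<and> z 5 < g5 (restrict z {1..3}) \<and>
            \<not> z 6 < g6 (restrict z {1..3}) \<and> z 7 < g7 (restrict z {1..3})" for z :: "nat \<Rightarrow> real"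
  have g45[measurable]: "g4 \<in> borel_measurable unitI3" "g5 \<in> borel_measurable unitI3"
    unfolding g4_def g5_def by measurable
  have [measurable]: "(\<lambda>z. restrict z {1..3}) \<in> measurable (unitI_Pi {1..7}) unitI3"
    by (rule measurable_restrict_subset) auto
  have [measurable]: "i \<in> {1..7} \<Longrightarrow> (\<lambda>z. z i) \<in> borel_measurable (unitI_Pi {1..7::nat})" for i
    by (rule measurable_compose[OF measurable_unitI_Pi_component measurable_borel_unitI]) auto
  have E_pred: "Measurable.pred (unitI_Pi {1..7}) E" unfolding E_def by measurable
  have inj: "inj_on f {1..7}" by (auto simp: inj_on_def f_def split: if_splits)
  have "AE \<omega> in unitI_Pi UNIV. \<not> E (\<lambda>n\<in>{1..7}. \<omega> (f n))"
  proof -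
    have f: "f 1 = Inl 1" "f 2 = Inl 2" "f 3 = Inl 3"
        "f 4 = Inr (1,2)" "f 5 = Inr (2,3)" "f 6 = Inr (1,3)" "f 7 = Inr (3,1)"
      by (simp_all add: f_def)
    have r: "restrict (\<lambda>n\<in>{1..7}. \<omega> (f n)) {1..3} = (\<lambda>n\<in>{1..3}. \<omega> (Inl n))" for \<omega>
      by (auto simp: f_def fun_eq_iff)
    have r': "(\<lambda>n\<in>{1..3}. \<omega> (f n)) = (\<lambda>n\<in>{1..3}. \<omega> (Inl n))" for \<omega> :: "nat + nat \<times> nat \<Rightarrow> real"
      by (auto simp: f_def fun_eq_iff)
    show ?thesis
      using AE unfolding sample_space_def
      by eventually_elim (simp add: E_def g4_def g5_def f r r' f[simplified] r'[simplified])
  qed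
  then have "AE z in unitI_Pi {1..7}. \<not> E z"
    using E_pred by (intro AE_unitI_Pi_of_reindex[OF inj]) auto
  then have "emeasure (unitI_Pi {1..7}) {z \<in> space (unitI_Pi {1..7}). E z} = 0"
    by (subst (asm) AE_iff_measurable[OF _ refl]) (use E_pred in \<open>auto simp: pred_def\<close>)
  moreover have g_range: "g4 x \<in> {0..1} \<and> g5 x \<in> {0..1} \<and> g6 x \<in> {0..1} \<and> g7 x \<in> {0..1}"
    if "x \<in> space unitI3" for x
    using range[OF that] by (simp add: g4_def g5_def)
  ultimately have "(\<integral>\<^sup>+ x. ennreal (g4 x * g5 x * (1 - g6 x) * g7 x) \<partial>unitI3) = 0"
    using emeasure_threshold_event[OF g45 g67 g_range] unfolding E_def by simp
  moreover have "(\<lambda>x. ennreal (g4 x * g5 x * (1 - g6 x) * g7 x)) \<in> borel_measurable unitI3"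
    by measurable
  ultimately have "AE x in unitI3. ennreal (g4 x * g5 x * (1 - g6 x) * g7 x) = 0"
    by (subst (asm) nn_integral_0_iff_AE) auto
  then show ?thesis
  proof (rule AE_mp, intro AE_I2 impI)
    fix x assume "x \<in> space unitI3" and "ennreal (g4 x * g5 x * (1 - g6 x) * g7 x) = 0"
    moreover have "0 \<le> g4 x * g5 x * (1 - g6 x) * g7 x"
      using range[OF \<open>x \<in> space unitI3\<close>] by (auto simp: g4_def g5_def)
    ultimately show "W (x 1) (x 2) * W (x 2) (x 3) * (1 - g6 x) * g7 x = 0"
      by (simp add: g4_def g5_def)
  qed
qed

lemma rand_is_poset_trans:
  "rand_is_poset W V \<omega> \<Longrightarrow> x \<in> V \<Longrightarrow> y \<in> V \<Longrightarrow> z \<in> V \<Longrightarrow>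
    rand_edge W \<omega> x y \<Longrightarrow> rand_edge W \<omega> y z \<Longrightarrow> rand_edge W \<omega> x z"
  unfolding rand_is_poset_def strict_po_on_def by blast

lemma AE_rand_is_poset_imp_hom_density_conditions:
  fixes W :: "real \<Rightarrow> real \<Rightarrow> real"
  assumes meas[measurable]: "(\<lambda>(x,y). W x y) \<in> borel_measurable (unitI \<Otimes>\<^sub>M unitI)"
    and range: "\<forall>x\<in>{0..1}. \<forall>y\<in>{0..1}. 0 \<le> W x y \<and> W x y \<le> 1"
    and poset: "AE \<omega> in sample_space. rand_is_poset W {1..3} \<omega>"
  shows "hom_density 3 D1 W = hom_density 3 D2 W \<and> hom_density 3 D3 W = 0"
proof -
  have W01: "W (x i) (x j) \<in> {0..1}" if "x \<in> space unitI3" "i \<in> {1..3}" "j \<in> {1..3}" for x i j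
    using range space_unitI_Pi[OF that(1,2)] space_unitI_Pi[OF that(1,3)] by auto
  have path: "AE \<omega> in sample_space. \<not> (rand_edge W \<omega> 1 2 \<and> rand_edge W \<omega> 2 3 \<and> \<not> rand_edge W \<omega> 1 3)"
    using poset by eventually_elim (use rand_is_poset_trans[of W "{1..3}" _ 1 2 3] in auto)
  have cycle: "AE \<omega> in sample_space. \<not> (rand_edge W \<omega> 1 2 \<and> rand_edge W \<omega> 2 3 \<and> rand_edge W \<omega> 3 1)"
    using poset
  proof eventually_elim
    case (elim \<omega>)
    show ?case
      using rand_is_poset_trans[OF elim, of 1 2 3] rand_is_poset_trans[OF elim, of 1 3 1]
      by (auto simp: rand_edge_def)
  qed
  have "AE x in unitI3. W (x 1) (x 2) * W (x 2) (x 3) * (1 - W (x 1) (x 3)) * 1 = 0"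
  proof (rule AE_threshold_event_null[OF meas])
    fix x assume "x \<in> space unitI3"
    then show "W (x 1) (x 2) \<in> {0..1} \<and> W (x 2) (x 3) \<in> {0..1} \<and> W (x 1) (x 3) \<in> {0..1} \<and> (1::real) \<in> {0..1}"
      by (intro conjI W01) auto
  qed (measurable, measurable, use path in \<open>eventually_elim, auto simp: rand_edge_def\<close>)
  moreover have "AE x in unitI3. W (x 1) (x 2) * W (x 2) (x 3) * (1 - 0) * W (x 3) (x 1) = 0"
  proof (rule AE_threshold_event_null[OF meas])
    fix x assume "x \<in> space unitI3"
    then show "W (x 1) (x 2) \<in> {0..1} \<and> W (x 2) (x 3) \<in> {0..1} \<and> (0::real) \<in> {0..1} \<and> W (x 3) (x 1) \<in> {0..1}"
      by (intro conjI W01) auto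
  qed (measurable, measurable, use cycle in \<open>eventually_elim, auto simp: rand_edge_def\<close>)
  ultimately show ?thesis
    unfolding hom_density_conditions_iff_AE[OF meas range] by simp
qed

lemma strict_po_on_subset: "strict_po_on S R \<Longrightarrow> T \<subseteq> S \<Longrightarrow> strict_po_on T R"
  unfolding strict_po_on_def by blast

lemma strict_po_on_atLeast_iff: "strict_po_on {1..} R \<longleftrightarrow> (\<forall>n. strict_po_on {1..n::nat} R)"
proof
  assume "strict_po_on {1..} R"
  then show "\<forall>n. strict_po_on {1..n} R" by (auto elim: strict_po_on_subset)
next
  assume fin: "\<forall>n. strict_po_on {1..n} R"
  show "strict_po_on {1..} R"
    unfolding strict_po_on_def
  proof (intro conjI ballI impI)
    fix x y z :: nat assume "x \<in> {1..}" "y \<in> {1..}" "z \<in> {1..}"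
    then have "x \<in> {1..max x (max y z)}" "y \<in> {1..max x (max y z)}" "z \<in> {1..max x (max y z)}"
      by auto
    then show "\<not> R x x" and "R x y \<and> R y z \<Longrightarrow> R x z"
      using fin unfolding strict_po_on_def by blast+
  qed
qed

lemma AE_rand_is_poset_finite_iff_infinite:
  "(\<forall>n::nat. AE \<omega> in sample_space. rand_is_poset W {1..n} \<omega>) \<longleftrightarrow>
   (AE \<omega> in sample_space. rand_is_poset W {1..} \<omega>)"
proof -
  have "(AE \<omega> in sample_space. rand_is_poset W {1..} \<omega>) \<longleftrightarrow>
      (AE \<omega> in sample_space. \<forall>n. rand_is_poset W {1..n} \<omega>)"
    unfolding rand_is_poset_def strict_po_on_atLeast_iff by (rule refl)
  then show ?thesis by (simp only: AE_all_countable)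
qed

theorem lemma6p7:
  fixes W :: "real \<Rightarrow> real \<Rightarrow> real"
  assumes meas: "(\<lambda>(x,y). W x y) \<in> borel_measurable (unitI \<Otimes>\<^sub>M unitI)"
    and range: "\<forall>x\<in>{0..1}. \<forall>y\<in>{0..1}. 0 \<le> W x y \<and> W x y \<le> 1"
  shows "((\<forall>n::nat. AE \<omega> in sample_space. rand_is_poset W {1..n} \<omega>)
          \<longleftrightarrow> (AE \<omega> in sample_space. rand_is_poset W {1..} \<omega>))
       \<and> ((AE \<omega> in sample_space. rand_is_poset W {1..} \<omega>)
          \<longleftrightarrow> (\<exists>prec W'. ordered_unitI prec \<and> is_kernel prec W' \<and>
                 (AE p in unitI \<Otimes>\<^sub>M unitI. W (fst p) (snd p) = W' (fst p) (snd p))))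
       \<and> ((\<exists>prec W'. ordered_unitI prec \<and> is_kernel prec W' \<and>
                 (AE p in unitI \<Otimes>\<^sub>M unitI. W (fst p) (snd p) = W' (fst p) (snd p)))
          \<longleftrightarrow> (hom_density 3 D1 W = hom_density 3 D2 W \<and> hom_density 3 D3 W = 0))"
    (is "(?fin \<longleftrightarrow> ?inf) \<and> (_ \<longleftrightarrow> ?ker) \<and> (_ \<longleftrightarrow> ?dens)")
proof -
  have fin_inf: "?fin \<longleftrightarrow> ?inf" by (rule AE_rand_is_poset_finite_iff_infinite)
  have inf_dens: "?inf \<Longrightarrow> ?dens"
    using fin_inf AE_rand_is_poset_imp_hom_density_conditions[OF meas range] by blast
  have dens_ker: "?dens \<Longrightarrow> ?ker"
  proof -
    assume ?dens
    then have path: "AE x in unitI3. W (x 1) (x 2) * W (x 2) (x 3) * (1 - W (x 1) (x 3)) = 0"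
      and triangle: "AE x in unitI3. W (x 1) (x 2) * W (x 2) (x 3) * W (x 3) (x 1) = 0"
      by (simp_all add: hom_density_conditions_iff_AE[OF meas range])
    from path have trans: "AE x in unitI3. W (x 1) (x 2) > 0 \<and> W (x 2) (x 3) > 0 \<longrightarrow> W (x 1) (x 3) = 1"
      by eventually_elim auto
    show ?ker
      using kernel_of_AE_transitive[OF meas range AE_out_transitive[OF trans]
          AE_in_transitive[OF trans] AE_null_two_cycles[OF trans triangle]] .
  qed
  have ker_inf: "?ker \<Longrightarrow> ?inf" using kernel_imp_AE_rand_is_poset by blast
  show ?thesis using fin_inf inf_dens dens_ker ker_inf by blast
qed

end
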